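(* Let $G=\mathbb Z\wr\mathbb Z=\langle a\rangle\wr\langle b\rangle$. Then $\mathrm{pw}(G,\{a,b\})\le 3$.
   Context: $a$ generates the first (base) infinite cyclic factor and $b$ the second (acting) infinite cyclic factor of the restricted wreath product. A palindrome in a group generated by $X$ is an element represented by a reduced word in $X^{\pm1}$ reading the same forwards and backwards; $l_{\mathcal P}(g)$ is the minimal number of palindromes whose product is $g$; $\mathrm{pw}(G,X)=\sup_{g\in G}l_{\mathcal P}(g)$. *)

theory Defs
  imports Main "HOL-Library.Extended_Nat"
begin

text \<open>Elements are pairs (f, m): f : int \<Rightarrow> int a finitely supported function
  (the base group, the restricted direct sum of copies of <a> indexed by Z) and
  m \<in> Z (the power of b). Multiplication: b acts on the base by shifting.\<close>

type_synonym wr = "(int \<Rightarrow> int) \<times> int"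

definition wr_carrier :: "wr set" where
  "wr_carrier = {(f, m). finite {i. f i \<noteq> 0}}"

definition wr_mult :: "wr \<Rightarrow> wr \<Rightarrow> wr" where
  "wr_mult x y = (\<lambda>i. fst x i + fst y (i - snd x), snd x + snd y)"

definition wr_one :: wr where
  "wr_one = (\<lambda>_. 0, 0)"

definition wr_inv :: "wr \<Rightarrow> wr" where
  "wr_inv x = (\<lambda>i. - fst x (i + snd x), - snd x)"

definition wr_a :: wr where
  "wr_a = ((\<lambda>i. if i = 0 then 1 else 0), 0)"

definition wr_b :: wr where
  "wr_b = ((\<lambda>_. 0), 1)"

datatype gen = GA | GB

text \<open>A letter is a generator together with an exponent sign (True = +1, False = -1).\<close>
type_synonym letter = "gen \<times> bool"

definition letter_inv :: "letter \<Rightarrow> letter" where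
  "letter_inv l = (fst l, \<not> snd l)"

definition gen_elem :: "gen \<Rightarrow> wr" where
  "gen_elem g = (case g of GA \<Rightarrow> wr_a | GB \<Rightarrow> wr_b)"

definition letter_elem :: "letter \<Rightarrow> wr" where
  "letter_elem l = (if snd l then gen_elem (fst l) else wr_inv (gen_elem (fst l)))"

definition eval_word :: "letter list \<Rightarrow> wr" where
  "eval_word w = foldr (\<lambda>l acc. wr_mult (letter_elem l) acc) w wr_one"

definition reduced :: "letter list \<Rightarrow> bool" where
  "reduced w = successively (\<lambda>x y. y \<noteq> letter_inv x) w"

definition palindrome :: "wr \<Rightarrow> bool" where
  "palindrome g = (\<exists>w. reduced w \<and> rev w = w \<and> eval_word w = g)"

definition wr_prod :: "wr list \<Rightarrow> wr" where
  "wr_prod ps = foldr wr_mult ps wr_one"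

definition pal_length :: "wr \<Rightarrow> enat" where
  "pal_length g = Inf {enat (length ps) | ps. (\<forall>p\<in>set ps. palindrome p) \<and> wr_prod ps = g}"

definition pal_width :: enat where
  "pal_width = Sup (pal_length ` wr_carrier)"

end

theory Submission
  imports Defs "HOL-Library.Infinite_Set"
begin

text \<open>An element (h, T) with T \<ge> 0 and h symmetric about T/2, i.e. h (T - i) = h i, is a
  palindrome: reading h through a window [-N, T + N] symmetric about T/2 gives the reduced
  palindromic word b^(-N) a^h(-N) b a^h(-N+1) b \<dots> b a^h(T+N) b^(-N).
  Every finitely supported f splits as f = u + v with u symmetric about 1/2 and v symmetric
  about 1 (v is assembled from the tail sums of f), and then
  (f, m) = (u, 1) \<cdot> (v(\<cdot> + 1), 0) \<cdot> (0, m - 1) is a product of three palindromes.\<close>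

lemma wr_mult_assoc: "wr_mult (wr_mult x y) z = wr_mult x (wr_mult y z)"
  by (auto simp: wr_mult_def algebra_simps)

lemma wr_mult_one_left [simp]: "wr_mult wr_one x = x"
  by (simp add: wr_mult_def wr_one_def)

lemma eval_word_Nil [simp]: "eval_word [] = wr_one"
  by (simp add: eval_word_def)

lemma eval_word_Cons [simp]: "eval_word (l # w) = wr_mult (letter_elem l) (eval_word w)"
  by (simp add: eval_word_def)

lemma eval_word_append: "eval_word (v @ w) = wr_mult (eval_word v) (eval_word w)"
  by (induction v) (simp_all add: wr_mult_assoc)

definition power_word :: "gen \<Rightarrow> int \<Rightarrow> letter list" where
  "power_word g e = replicate (nat \<bar>e\<bar>) (g, 0 \<le> e)"

lemma eval_power_word_GA: "eval_word (power_word GA e) = ((\<lambda>i. if i = 0 then e else 0), 0)"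
proof -
  have "eval_word (replicate n (GA, s)) =
      ((\<lambda>i. if i = 0 then (if s then int n else - int n) else 0), 0)" for n s
    by (induction n) (auto simp: letter_elem_def gen_elem_def wr_a_def wr_inv_def wr_mult_def wr_one_def)
  then show ?thesis by (simp add: power_word_def fun_eq_iff)
qed

lemma eval_power_word_GB: "eval_word (power_word GB e) = ((\<lambda>_. 0), e)"
proof -
  have "eval_word (replicate n (GB, s)) = ((\<lambda>_. 0), if s then int n else - int n)" for n s
    by (induction n) (auto simp: letter_elem_def gen_elem_def wr_b_def wr_inv_def wr_mult_def wr_one_def)
  then show ?thesis by (simp add: power_word_def)
qed

lemma rev_power_word [simp]: "rev (power_word g e) = power_word g e"
  by (simp add: power_word_def)

lemma reduced_power_word: "reduced (power_word g e)"
proof -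
  have "successively (\<lambda>x y. y \<noteq> letter_inv x) (replicate n l)" for n l
  proof (induction n)
    case (Suc n)
    then show ?case by (cases n) (simp_all add: letter_inv_def prod_eq_iff)
  qed simp
  then show ?thesis by (simp add: reduced_def power_word_def)
qed

primrec lamp_word :: "(int \<Rightarrow> int) \<Rightarrow> nat \<Rightarrow> letter list" where
  "lamp_word g 0 = power_word GA (g 0)"
| "lamp_word g (Suc n) = power_word GA (g 0) @ (GB, True) # lamp_word (\<lambda>i. g (i + 1)) n"

lemma eval_lamp_word:
  "eval_word (lamp_word g n) = ((\<lambda>i. if 0 \<le> i \<and> i \<le> int n then g i else 0), int n)"
proof (induction n arbitrary: g)
  case 0
  then show ?case by (auto simp: eval_power_word_GA fun_eq_iff)
next
  case (Suc n)
  have "eval_word (lamp_word g (Suc n)) = wr_mult (eval_word (power_word GA (g 0)))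
      (wr_mult wr_b (eval_word (lamp_word (\<lambda>i. g (i + 1)) n)))"
    by (simp add: eval_word_append letter_elem_def gen_elem_def)
  then show ?case
    by (simp add: Suc eval_power_word_GA wr_b_def wr_mult_def fun_eq_iff)
qed

lemma lamp_word_Suc_snoc:
  "lamp_word g (Suc n) = lamp_word g n @ (GB, True) # power_word GA (g (int (Suc n)))"
proof (induction n arbitrary: g)
  case (Suc n)
  show ?case
    using Suc[of "\<lambda>i. g (i + 1)"] by (simp del: lamp_word.simps(2)) (simp add: add.commute)
qed simp

lemma lamp_word_cong:
  "(\<And>i. 0 \<le> i \<Longrightarrow> i \<le> int n \<Longrightarrow> g i = g' i) \<Longrightarrow> lamp_word g n = lamp_word g' n"
proof (induction n arbitrary: g g')
  case (Suc n)
  have "lamp_word (\<lambda>i. g (i + 1)) n = lamp_word (\<lambda>i. g' (i + 1)) n"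
    by (rule Suc.IH) (use Suc.prems in auto)
  then show ?case using Suc.prems[of 0] by simp
qed simp

lemma rev_lamp_word: "rev (lamp_word g n) = lamp_word (\<lambda>i. g (int n - i)) n"
proof (induction n arbitrary: g)
  case (Suc n)
  have "rev (lamp_word g (Suc n)) =
      power_word GA (g (int (Suc n))) @ (GB, True) # rev (lamp_word g n)"
    by (simp only: lamp_word_Suc_snoc rev_append) simp
  also have "\<dots> = lamp_word (\<lambda>i. g (int (Suc n) - i)) (Suc n)"
    by (simp add: Suc algebra_simps)
  finally show ?case .
qed simp

lemma lamp_word_no_b_inverse: "(GB, False) \<notin> set (lamp_word g n)"
  by (induction n arbitrary: g) (auto simp: power_word_def)

lemma reduced_lamp_word: "reduced (lamp_word g n)"
proof (induction n arbitrary: g)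
  case 0
  then show ?case by (simp add: reduced_power_word)
next
  case (Suc n)
  define w where "w = lamp_word (\<lambda>i. g (i + 1)) n"
  have "(GB, False) \<notin> set w"
    unfolding w_def by (rule lamp_word_no_b_inverse)
  then have "successively (\<lambda>x y. y \<noteq> letter_inv x) ((GB, True) # w)"
    using Suc[of "\<lambda>i. g (i + 1)"] by (cases w) (auto simp: reduced_def w_def letter_inv_def)
  moreover have "power_word GA (g 0) = [] \<or> fst (last (power_word GA (g 0))) = GA"
    by (cases "g 0 = 0") (simp_all add: power_word_def)
  ultimately show ?case using reduced_power_word[of GA "g 0"]
    by (auto simp: reduced_def successively_append_iff w_def letter_inv_def)
qed

lemma hd_lamp_word: "g 0 \<noteq> 0 \<Longrightarrow> hd (lamp_word g n) = (GA, 0 \<le> g 0)"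
  by (cases n) (simp_all add: power_word_def)

lemma palindrome_symmetric_window:
  assumes T: "0 \<le> T"
    and sym: "\<And>i. h (T - i) = h i"
    and supp: "\<And>i. h i \<noteq> 0 \<Longrightarrow> - int N \<le> i \<and> i \<le> T + int N"
    and ends: "N = 0 \<or> h (- int N) \<noteq> 0"
  shows "palindrome (h, T)"
proof -
  txt \<open>The hypothesis ends keeps the outer b^(-N) from cancelling against the middle word.\<close>
  define L where "L = nat T + 2 * N"
  define M where "M = lamp_word (\<lambda>i. h (i - int N)) L"
  define B where "B = power_word GB (- int N)"
  have L: "int L = T + 2 * int N"
    using T by (simp add: L_def)
  have rev_M: "rev M = M"
    unfolding M_def rev_lamp_word
  proof (rule lamp_word_cong)
    fix i
    show "h (int L - i - int N) = h (i - int N)"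
      using sym[of "i - int N"] by (simp add: L algebra_simps)
  qed
  have eval: "eval_word (B @ M @ B) = (h, T)"
    using supp
    by (force simp: B_def M_def eval_word_append eval_power_word_GB eval_lamp_word
        wr_mult_def L fun_eq_iff)
  have "reduced (B @ M @ B)"
  proof (cases "N = 0")
    case True
    then show ?thesis using reduced_lamp_word by (simp add: B_def M_def power_word_def)
  next
    case False
    then have "hd M = (GA, 0 \<le> h (- int N))"
      using ends by (simp add: M_def hd_lamp_word)
    moreover have "M \<noteq> []"
      using False by (cases L) (simp_all add: M_def L_def)
    moreover have "last M = hd M"
      using rev_M by (metis hd_rev)
    moreover have "B \<noteq> []" "hd B = (GB, False)" "last B = (GB, False)"
      using False by (simp_all add: B_def power_word_def)
    ultimately show ?thesis
      using reduced_power_word[of GB "- int N"] reduced_lamp_word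
      by (simp add: reduced_def successively_append_iff letter_inv_def B_def M_def)
  qed
  moreover have "rev (B @ M @ B) = B @ M @ B"
    by (simp add: rev_M B_def)
  ultimately show ?thesis
    using eval unfolding palindrome_def by blast
qed

lemma palindrome_symmetric_bounded:
  assumes "0 \<le> T" and "\<And>i. h (T - i) = h i"
    and "\<And>i. h i \<noteq> 0 \<Longrightarrow> - int N \<le> i \<and> i \<le> T + int N"
  shows "palindrome (h, T)"
  using assms(3)
proof (induction N)
  case 0
  then show ?case by (intro palindrome_symmetric_window[of T h 0, OF assms(1,2)]) simp_all
next
  case (Suc N)
  show ?case
  proof (cases "h (- int (Suc N)) = 0")
    case True
    then have "h (T + int (Suc N)) = 0"
      using assms(2)[of "- int (Suc N)"] by (simp add: algebra_simps)
    then have "- int N \<le> i \<and> i \<le> T + int N" if "h i \<noteq> 0" for i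
    proof -
      have "i \<noteq> - int (Suc N)" "i \<noteq> T + int (Suc N)"
        using True \<open>h (T + int (Suc N)) = 0\<close> that by auto
      then show ?thesis using Suc.prems[OF that] by auto
    qed
    then show ?thesis by (rule Suc.IH)
  next
    case False
    then show ?thesis
      using palindrome_symmetric_window[of T h "Suc N", OF assms(1,2) Suc.prems] by blast
  qed
qed

lemma palindrome_symmetric:
  assumes "0 \<le> T" and "\<And>i. h (T - i) = h i" and "finite {i. h i \<noteq> 0}"
  shows "palindrome (h, T)"
proof -
  obtain K where "abs ` {i. h i \<noteq> 0} \<subseteq> {..K}"
    using assms(3) finite_int_iff_bounded_le by blast
  then have "- int (nat K) \<le> i \<and> i \<le> T + int (nat K)" if "h i \<noteq> 0" for i
    using that assms(1) by force
  then show ?thesis by (rule palindrome_symmetric_bounded[of T h, OF assms(1,2)])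
qed

lemma palindrome_b_power: "palindrome ((\<lambda>_. 0), k)"
  unfolding palindrome_def
  by (rule exI[of _ "power_word GB k"]) (simp add: reduced_power_word eval_power_word_GB)

lemma symmetric_decomposition:
  fixes f :: "int \<Rightarrow> int"
  assumes "finite {i. f i \<noteq> 0}"
  obtains u v where "\<And>i. f i = u i + v i"
    and "\<And>i. u (1 - i) = u i" and "finite {i. u i \<noteq> 0}"
    and "\<And>i. v (2 - i) = v i" and "finite {i. v i \<noteq> 0}"
proof -
  obtain K where "abs ` {i. f i \<noteq> 0} \<subseteq> {..K}"
    using assms finite_int_iff_bounded_le by blast
  then have f_outside: "f i = 0" if "i < - K \<or> K < i" for i
    using that by force
  define t where "t i = sum f {i..K}" for i
  have t_step: "t i = f i + t (i + 1)" for i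
  proof (cases "i \<le> K")
    case True
    then have "{i..K} = insert i {i + 1..K}" by auto
    then show ?thesis by (simp add: t_def)
  next
    case False
    then show ?thesis by (simp add: t_def f_outside)
  qed
  have t_high: "t i = 0" if "K < i" for i
    using that by (simp add: t_def)
  have t_low: "t i = t (- K)" if "i \<le> - K" for i
    unfolding t_def using that by (intro sum.mono_neutral_right) (auto intro: f_outside)
  txt \<open>v i - v (i + 1) = f i - f (1 - i), which is exactly the symmetry of u = f - v.\<close>
  define v where "v i = t i + t (2 - i) - t (- K)" for i
  define u where "u i = f i - v i" for i
  show thesis
  proof
    show "f i = u i + v i" for i
      by (simp add: u_def)
    show "u (1 - i) = u i" for i
      using t_step[of i] t_step[of "1 - i"] by (simp add: u_def v_def algebra_simps)
    show "v (2 - i) = v i" for i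
      by (simp add: v_def)
    have "v i = 0" if "i < - K \<or> K + 2 < i" for i
      using that t_high[of i] t_low[of i] t_high[of "2 - i"] t_low[of "2 - i"]
      by (auto simp: v_def)
    then have v_supp: "{i. v i \<noteq> 0} \<subseteq> {- K..K + 2}"
      by (auto simp: not_less[symmetric])
    then show "finite {i. v i \<noteq> 0}"
      by (rule finite_subset) simp
    have "{i. u i \<noteq> 0} \<subseteq> {i. f i \<noteq> 0} \<union> {i. v i \<noteq> 0}"
      by (auto simp: u_def)
    then show "finite {i. u i \<noteq> 0}"
      using assms v_supp by (auto intro: finite_subset)
  qed
qed

lemma product_of_three_palindromes:
  assumes "finite {i. f i \<noteq> 0}"
  shows "\<exists>ps. length ps = 3 \<and> (\<forall>p\<in>set ps. palindrome p) \<and> wr_prod ps = (f, m)"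
proof -
  obtain u v where f: "\<And>i. f i = u i + v i"
    and u: "\<And>i. u (1 - i) = u i" "finite {i. u i \<noteq> 0}"
    and v: "\<And>i. v (2 - i) = v i" "finite {i. v i \<noteq> 0}"
    using symmetric_decomposition[OF assms] by blast
  define ps where "ps = [(u, 1), (\<lambda>i. v (i + 1), 0), ((\<lambda>_. 0), m - 1)]"
  have "palindrome (u, 1)"
    using u by (intro palindrome_symmetric) auto
  moreover have "palindrome (\<lambda>i. v (i + 1), 0)"
  proof (rule palindrome_symmetric)
    show "v (0 - i + 1) = v (i + 1)" for i
      using v(1)[of "i + 1"] by (simp add: algebra_simps)
    show "finite {i. v (i + 1) \<noteq> 0}"
      using finite_vimageI[OF v(2), of "\<lambda>i. i + 1"] by (simp add: inj_def)
  qed simp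
  moreover have "wr_prod ps = (f, m)"
    by (simp add: ps_def wr_prod_def wr_mult_def wr_one_def fun_eq_iff f)
  ultimately show ?thesis
    using palindrome_b_power by (intro exI[of _ ps]) (auto simp: ps_def)
qed

lemma pal_length_le_length:
  assumes "\<forall>p\<in>set ps. palindrome p"
  shows "pal_length (wr_prod ps) \<le> enat (length ps)"
  unfolding pal_length_def using assms by (blast intro: Inf_lower)

theorem corollary5p5:
  shows "pal_width \<le> 3"
  unfolding pal_width_def
proof (rule Sup_least)
  fix x assume "x \<in> pal_length ` wr_carrier"
  then obtain f m where x: "x = pal_length (f, m)" and "finite {i. f i \<noteq> 0}"
    by (auto simp: wr_carrier_def)
  then obtain ps where "length ps = 3" "\<forall>p\<in>set ps. palindrome p" "wr_prod ps = (f, m)"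
    using product_of_three_palindromes by blast
  then show "x \<le> 3"
    using pal_length_le_length[of ps] x by (simp add: numeral_eq_enat)
qed

end
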